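(* Let $\mathcal F_K^{\mathrm d}$ be the set of $F\in\mathcal F_K$ whose columns are mutually different, and let $\mathcal Q_K^{\mathrm{ua}}$ be the set of $Q\in\mathcal Q_K$ such that every column of $Q$ equals $e_k$ for some $k\in\{1,\dots,K\}$, and for every $k$ there is a column $i$ with $Q_{\star i}=e_k$. Then $\mathcal M'''=\bigcup_{K=1}^\infty\mathcal F_K^{\mathrm d}\times\mathcal Q_K^{\mathrm{ua}}=\bigcup_{K=1}^N\mathcal F_K^{\mathrm d}\times\mathcal Q_K^{\mathrm{ua}}$ and $\mathcal M'''$ is identifiable.
   Context: Fix positive integers $M$ and $N$. For a positive integer $K$, $\mathcal F_K$ is the set of real $M\times K$ matrices with all entries in $[0,1]$, and $\mathcal Q_K$ is the set of real $K\times N$ matrices with entries in $[0,1]$ each of whose columns sums to $1$. $e_k$ is the $k$-th standard basis vector of $\mathbb R^K$ and $A_{\star j}$ the $j$-th column of $A$. $(F^1,Q^1)\sim(F^2,Q^2)$ means $F^1,F^2$ have the same number $K$ of columns and there is a permutation $\pi$ of $\{1,\dots,K\}$ with $F^2_{sk}=F^1_{s\pi(k)}$ and $Q^2_{ki}=Q^1_{\pi(k)i}$ for all $s,k,i$. A set $\mathcal M$ of pairs is identifiable if for all $(F^1,Q^1),(F^2,Q^2)\in\mathcal M$, $F^1Q^1=F^2Q^2$ implies $(F^1,Q^1)\sim(F^2,Q^2)$. *)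

theory Defs
  imports "Jordan_Normal_Form.Matrix"
begin

text \<open>Matrices are Jordan_Normal_Form matrices; indices are 0-based
  (row s < M, column k < K, column i < N).\<close>

definition F_set :: "nat \<Rightarrow> nat \<Rightarrow> real mat set" where
  "F_set M K = {F \<in> carrier_mat M K. \<forall>s<M. \<forall>k<K. 0 \<le> F $$ (s,k) \<and> F $$ (s,k) \<le> 1}"

definition Q_set :: "nat \<Rightarrow> nat \<Rightarrow> real mat set" where
  "Q_set K N = {Q \<in> carrier_mat K N. (\<forall>k<K. \<forall>i<N. 0 \<le> Q $$ (k,i) \<and> Q $$ (k,i) \<le> 1)
      \<and> (\<forall>i<N. (\<Sum>k<K. Q $$ (k,i)) = 1)}"

definition F_d_set :: "nat \<Rightarrow> nat \<Rightarrow> real mat set" where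
  "F_d_set M K = {F \<in> F_set M K. \<forall>k<K. \<forall>k'<K. k \<noteq> k' \<longrightarrow> col F k \<noteq> col F k'}"

definition Q_ua_set :: "nat \<Rightarrow> nat \<Rightarrow> real mat set" where
  "Q_ua_set K N = {Q \<in> Q_set K N. (\<forall>i<N. \<exists>k<K. col Q i = unit_vec K k)
      \<and> (\<forall>k<K. \<exists>i<N. col Q i = unit_vec K k)}"

definition pair_equiv :: "nat \<Rightarrow> nat \<Rightarrow> real mat \<times> real mat \<Rightarrow> real mat \<times> real mat \<Rightarrow> bool" where
  "pair_equiv M N p1 p2 = (case p1 of (F1, Q1) \<Rightarrow> case p2 of (F2, Q2) \<Rightarrow>
      dim_col F1 = dim_col F2 \<and>
      (\<exists>\<pi>. \<pi> permutes {..<dim_col F1} \<and>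
         (\<forall>s<M. \<forall>k<dim_col F1. F2 $$ (s,k) = F1 $$ (s, \<pi> k)) \<and>
         (\<forall>k<dim_col F1. \<forall>i<N. Q2 $$ (k,i) = Q1 $$ (\<pi> k, i))))"

definition identifiable :: "nat \<Rightarrow> nat \<Rightarrow> (real mat \<times> real mat) set \<Rightarrow> bool" where
  "identifiable M N S = (\<forall>p1\<in>S. \<forall>p2\<in>S.
      fst p1 * snd p1 = fst p2 * snd p2 \<longrightarrow> pair_equiv M N p1 p2)"

end

theory Submission
  imports Defs "HOL-Combinatorics.Permutations"
begin

text \<open>A matrix \<open>Q \<in> Q_ua_set K N\<close> is the incidence matrix of a surjective labelling
  \<open>c : {..<N} \<rightarrow> {..<K}\<close>, so \<open>K \<le> N\<close>, and column \<open>i\<close> of \<open>F * Q\<close> is column \<open>c i\<close> of \<open>F\<close>.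
  If \<open>F\<^sub>1 Q\<^sub>1 = F\<^sub>2 Q\<^sub>2\<close> then \<open>col F\<^sub>1 \<circ> c\<^sub>1 = col F\<^sub>2 \<circ> c\<^sub>2\<close>; since both column maps are
  injective and both labellings are onto, the two factorizations of this map differ only by
  the bijection \<open>the_inv (col F\<^sub>1) \<circ> col F\<^sub>2\<close> between the label sets, which is the required
  permutation.\<close>

lemma factorizations_through_injections_unique:
  assumes inj1: "inj_on f1 B1" and inj2: "inj_on f2 B2"
    and onto1: "c1 ` A = B1" and onto2: "c2 ` A = B2"
    and factor: "\<And>a. a \<in> A \<Longrightarrow> f1 (c1 a) = f2 (c2 a)"
  obtains \<rho> where "bij_betw \<rho> B2 B1" "\<And>b. b \<in> B2 \<Longrightarrow> f2 b = f1 (\<rho> b)"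
    "\<And>a. a \<in> A \<Longrightarrow> \<rho> (c2 a) = c1 a"
proof
  have same_image: "f2 ` B2 = f1 ` B1"
    using factor by (force simp flip: onto1 onto2)
  have bij1: "bij_betw f1 B1 (f1 ` B1)" and bij2: "bij_betw f2 B2 (f1 ` B1)"
    using inj1 inj2 same_image by (auto simp: bij_betw_def)
  let ?\<rho> = "the_inv_into B1 f1 \<circ> f2"
  show "bij_betw ?\<rho> B2 B1"
    using bij_betw_trans[OF bij2 bij_betw_the_inv_into[OF bij1]] .
  show "f2 b = f1 (?\<rho> b)" if "b \<in> B2" for b
  proof -
    have "f2 b \<in> f1 ` B1" using that same_image by blast
    then show ?thesis by (simp add: f_the_inv_into_f[OF inj1])
  qed
  show "?\<rho> (c2 a) = c1 a" if "a \<in> A" for a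
  proof -
    have "c1 a \<in> B1" using that onto1 by blast
    then show ?thesis using the_inv_into_f_f[OF inj1] by (simp flip: factor[OF that])
  qed
qed

lemma Q_ua_setE:
  assumes "Q \<in> Q_ua_set K N"
  obtains c where "Q \<in> carrier_mat K N" "c ` {..<N} = {..<K}"
    "\<And>i. i < N \<Longrightarrow> col Q i = unit_vec K (c i)"
proof
  from assms have cols: "\<forall>i<N. \<exists>k<K. col Q i = unit_vec K k"
    and onto: "\<forall>k<K. \<exists>i<N. col Q i = unit_vec K k" and "Q \<in> carrier_mat K N"
    unfolding Q_ua_set_def Q_set_def by auto
  then show "Q \<in> carrier_mat K N" by simp
  define c where "c i = (SOME k. k < K \<and> col Q i = unit_vec K k)" for i
  have c: "c i < K \<and> col Q i = unit_vec K (c i)" if "i < N" for i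
    using someI_ex[OF cols[rule_format, OF that]] by (simp add: c_def)
  then show "col Q i = unit_vec K (c i)" if "i < N" for i
    using that by blast
  show "c ` {..<N} = {..<K}"
  proof
    show "c ` {..<N} \<subseteq> {..<K}" using c by auto
    show "{..<K} \<subseteq> c ` {..<N}"
    proof
      fix k assume "k \<in> {..<K}"
      then obtain i where i: "i < N" "col Q i = unit_vec K k" using onto by auto
      with c have "(unit_vec K (c i) :: real vec) = unit_vec K k" by metis
      with i c \<open>k \<in> {..<K}\<close> have "k = c i" by (auto simp: unit_vec_eq)
      with i show "k \<in> c ` {..<N}" by blast
    qed
  qed
qed

lemma Q_ua_set_dim_le:
  assumes "Q \<in> Q_ua_set K N"
  shows "K \<le> N"
proof -
  obtain c where "c ` {..<N} = {..<K}" using Q_ua_setE[OF assms] by metis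
  then show ?thesis using card_image_le[of "{..<N}" c] by simp
qed

lemma F_d_setD:
  assumes "F \<in> F_d_set M K"
  shows "F \<in> carrier_mat M K" "inj_on (col F) {..<K}"
  using assms unfolding F_d_set_def F_set_def inj_on_def by auto

lemma index_mat_unit_col:
  fixes B :: "'a :: zero_neq_one mat"
  assumes "B \<in> carrier_mat n p" "i < p" "j < n" "k < n"
    and "col B i = unit_vec n k"
  shows "B $$ (j, i) = (if j = k then 1 else 0)"
  using arg_cong[OF assms(5), of "\<lambda>v. v $ j"] assms(1-4) by simp

lemma col_mult_unit_col:
  fixes A :: "'a :: semiring_1 mat"
  assumes "A \<in> carrier_mat m n" "B \<in> carrier_mat n p" "i < p" "k < n"
    and "col B i = unit_vec n k"
  shows "col (A * B) i = col A k"
  using assms by (intro eq_vecI) auto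

lemma pair_equiv_if_mult_eq:
  assumes F1: "F1 \<in> F_d_set M K1" and Q1: "Q1 \<in> Q_ua_set K1 N"
    and F2: "F2 \<in> F_d_set M K2" and Q2: "Q2 \<in> Q_ua_set K2 N"
    and eq: "F1 * Q1 = F2 * Q2"
  shows "pair_equiv M N (F1, Q1) (F2, Q2)"
proof -
  obtain c1 where Q1C: "Q1 \<in> carrier_mat K1 N" and onto1: "c1 ` {..<N} = {..<K1}"
    and col_Q1: "\<And>i. i < N \<Longrightarrow> col Q1 i = unit_vec K1 (c1 i)"
    using Q_ua_setE[OF Q1] by metis
  obtain c2 where Q2C: "Q2 \<in> carrier_mat K2 N" and onto2: "c2 ` {..<N} = {..<K2}"
    and col_Q2: "\<And>i. i < N \<Longrightarrow> col Q2 i = unit_vec K2 (c2 i)"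
    using Q_ua_setE[OF Q2] by metis
  note F1C = F_d_setD(1)[OF F1] and inj1 = F_d_setD(2)[OF F1]
  note F2C = F_d_setD(1)[OF F2] and inj2 = F_d_setD(2)[OF F2]
  have col_eq: "col F1 (c1 i) = col F2 (c2 i)" if "i \<in> {..<N}" for i
  proof -
    have i: "i < N" and labels: "c1 i < K1" "c2 i < K2" using that onto1 onto2 by auto
    have "col F1 (c1 i) = col (F1 * Q1) i"
      using col_mult_unit_col[OF F1C Q1C i labels(1) col_Q1[OF i]] by simp
    also have "\<dots> = col F2 (c2 i)"
      using col_mult_unit_col[OF F2C Q2C i labels(2) col_Q2[OF i]] eq by simp
    finally show ?thesis .
  qed
  obtain \<rho> where bij: "bij_betw \<rho> {..<K2} {..<K1}"
    and col_F2: "\<And>k. k \<in> {..<K2} \<Longrightarrow> col F2 k = col F1 (\<rho> k)"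
    and relabel: "\<And>i. i \<in> {..<N} \<Longrightarrow> \<rho> (c2 i) = c1 i"
    using factorizations_through_injections_unique[OF inj1 inj2 onto1 onto2] col_eq by blast
  have K: "K2 = K1" using bij_betw_same_card[OF bij] by simp
  let ?\<sigma> = "restrict_id \<rho> {..<K1}"
  have \<rho>_range: "\<rho> k < K1" if "k < K1" for k
    using bij that K by (auto simp: bij_betw_def)
  have "?\<sigma> permutes {..<K1}"
    using bij K by (simp add: permutes_restrict_id)
  moreover have "F2 $$ (s, k) = F1 $$ (s, ?\<sigma> k)" if "s < M" "k < K1" for s k
    using arg_cong[OF col_F2, of k "\<lambda>v. v $ s"] \<rho>_range that F1C F2C K
    by (simp add: restrict_id_def)
  moreover have "Q2 $$ (k, i) = Q1 $$ (?\<sigma> k, i)" if k: "k < K1" and i: "i < N" for k i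
  proof -
    have labels: "c1 i < K1" "c2 i < K1" using i onto1 onto2 K by auto
    have "Q2 $$ (k, i) = (if k = c2 i then 1 else 0)"
      using index_mat_unit_col[OF Q2C i _ _ col_Q2[OF i]] k labels K by simp
    also have "\<dots> = (if \<rho> k = c1 i then 1 else 0)"
      using bij k i labels relabel[of i] K by (auto simp: bij_betw_def inj_on_def)
    also have "\<dots> = Q1 $$ (?\<sigma> k, i)"
      using index_mat_unit_col[OF Q1C i \<rho>_range[OF k] labels(1) col_Q1[OF i]] k
      by (simp add: restrict_id_def)
    finally show ?thesis .
  qed
  ultimately show ?thesis
    unfolding pair_equiv_def using F1C F2C K by auto
qed

theorem mainTheorem7:
  fixes M N :: nat
  assumes "0 < M" and "0 < N"
  shows "(\<Union>K\<in>{1..}. F_d_set M K \<times> Q_ua_set K N) = (\<Union>K\<in>{1..N}. F_d_set M K \<times> Q_ua_set K N)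
     \<and> identifiable M N (\<Union>K\<in>{1..}. F_d_set M K \<times> Q_ua_set K N)"
proof
  show "(\<Union>K\<in>{1..}. F_d_set M K \<times> Q_ua_set K N) = (\<Union>K\<in>{1..N}. F_d_set M K \<times> Q_ua_set K N)"
    using Q_ua_set_dim_le by fastforce
  show "identifiable M N (\<Union>K\<in>{1..}. F_d_set M K \<times> Q_ua_set K N)"
    unfolding identifiable_def using pair_equiv_if_mult_eq by fastforce
qed

end
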